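(* Let $A\in\mathbb{R}^{m\times n}$ with $A'A$ invertible, $y\in\mathbb{R}^m$, $\gamma>0$, $\mu\ge0$. Then the optimal value $\zeta_{CR}$ of (CR) satisfies $$\zeta_{CR}=\max_{p\in\mathbb{R}^n}\ \|y\|_2^2-\Big(A'y-\tfrac{1}{2\gamma}p\Big)'(A'A)^{-1}\Big(A'y-\tfrac{1}{2\gamma}p\Big)+\sum_{i=1}^n\min\Big\{0,\ \mu-\tfrac{p_i^2}{4\gamma}\Big\}.$$
   Context: (CR) is the problem $\zeta_{CR}=\min_{x,z}\ \|y-Ax\|_2^2+\frac1\gamma\sum_{i=1}^n \frac{x_i^2}{z_i}+\mu\sum_{i=1}^n z_i$ subject to $x\in\mathbb{R}^n$, $z\in[0,1]^n$, where $x_i^2/z_i=0$ if $x_i=z_i=0$ and $x_i^2/z_i=+\infty$ if $z_i=0$, $x_i\ne0$. *)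

theory Defs
  imports "HOL-Analysis.Analysis" "HOL-Library.Extended_Real"
begin

definition persp :: "real \<Rightarrow> real \<Rightarrow> ereal" where
  "persp x z = (if z = 0 then (if x = 0 then 0 else \<infinity>) else ereal (x\<^sup>2 / z))"

definition CR_obj :: "real^'n^'m \<Rightarrow> real^'m \<Rightarrow> real \<Rightarrow> real \<Rightarrow> real^'n \<Rightarrow> real^'n \<Rightarrow> ereal" where
  "CR_obj A y \<gamma> \<mu> x z =
     ereal ((norm (y - A *v x))\<^sup>2)
     + ereal (1 / \<gamma>) * (\<Sum>i\<in>UNIV. persp (x $ i) (z $ i))
     + ereal (\<mu> * (\<Sum>i\<in>UNIV. z $ i))"

definition zeta_CR :: "real^'n^'m \<Rightarrow> real^'m \<Rightarrow> real \<Rightarrow> real \<Rightarrow> ereal" where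
  "zeta_CR A y \<gamma> \<mu> =
     (INF xz \<in> {(x, z). \<forall>i. 0 \<le> z $ i \<and> z $ i \<le> 1}. CR_obj A y \<gamma> \<mu> (fst xz) (snd xz))"

definition CR_dual :: "real^'n^'m \<Rightarrow> real^'m \<Rightarrow> real \<Rightarrow> real \<Rightarrow> real^'n \<Rightarrow> real" where
  "CR_dual A y \<gamma> \<mu> p =
     (let v = transpose A *v y - (1 / (2 * \<gamma>)) *\<^sub>R p in
      (norm y)\<^sup>2 - v \<bullet> (matrix_inv (transpose A ** A) *v v)
      + (\<Sum>i\<in>UNIV. min 0 (\<mu> - (p $ i)\<^sup>2 / (4 * \<gamma>))))"

end

theory Submission
  imports Defs
begin

text \<open>Put \<open>x\<^sub>p = (A'A)\<^sup>-\<^sup>1 (A'y - p/(2\<gamma>))\<close>. For feasible \<open>(x, z)\<close> the objective of (CR) equals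
  the dual objective at \<open>p\<close> plus \<open>\<parallel>A (x - x\<^sub>p)\<parallel>\<^sup>2\<close> plus, for every \<open>i\<close>, the excess of
  \<open>x\<^sub>i\<^sup>2/(\<gamma> z\<^sub>i) + \<mu> z\<^sub>i - p\<^sub>i x\<^sub>i/\<gamma>\<close> over its minimum \<open>min {0, \<mu> - p\<^sub>i\<^sup>2/(4\<gamma>)}\<close>.
  These gaps are nonnegative, which is weak duality. The dual objective is continuous and tends
  to \<open>-\<infinity>\<close> as any \<open>|p\<^sub>i|\<close> grows, so it has a maximiser \<open>p\<close>. Moving only \<open>p\<^sub>i\<close> changes it by a
  linear term with slope \<open>(x\<^sub>p)\<^sub>i/\<gamma>\<close>, a concave quadratic and the change of \<open>min {0, \<mu> - p\<^sub>i\<^sup>2/(4\<gamma>)}\<close>;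
  comparing one-sided slopes at the maximum shows \<open>(x\<^sub>p)\<^sub>i = p\<^sub>i z\<^sub>i/2\<close> for some \<open>z\<^sub>i \<in> [0,1]\<close> that
  closes the \<open>i\<close>-th gap, so \<open>(x\<^sub>p, z)\<close> attains the dual value.\<close>

section \<open>A one-dimensional problem\<close>

definition dual_penalty :: "real \<Rightarrow> real \<Rightarrow> real \<Rightarrow> real" where
  "dual_penalty \<gamma> \<mu> u = min 0 (\<mu> - u\<^sup>2 / (4 * \<gamma>))"

text \<open>\<open>dual_penalty \<gamma> \<mu> c\<close> is the minimum of \<open>coord_lagrangian \<gamma> \<mu> c x z\<close> over \<open>x\<close> and
  \<open>z \<in> [0,1]\<close> (with \<open>x = 0\<close> if \<open>z = 0\<close>); the minimum is attained at \<open>x = c z / 2\<close>.\<close>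
definition coord_lagrangian :: "real \<Rightarrow> real \<Rightarrow> real \<Rightarrow> real \<Rightarrow> real \<Rightarrow> real" where
  "coord_lagrangian \<gamma> \<mu> c x z = (1 / \<gamma>) * (if z = 0 then 0 else x\<^sup>2 / z) + \<mu> * z - c * x / \<gamma>"

lemma coord_lagrangian_split:
  assumes "\<gamma> \<noteq> 0" and "z \<noteq> 0"
  shows "coord_lagrangian \<gamma> \<mu> c x z = z * (\<mu> - c\<^sup>2 / (4 * \<gamma>)) + (x - c * z / 2)\<^sup>2 / (\<gamma> * z)"
  using assms by (simp add: coord_lagrangian_def field_simps power2_eq_square)

lemma dual_penalty_le_coord_lagrangian:
  assumes "\<gamma> > 0" and "0 \<le> z" and "z \<le> 1" and "z = 0 \<longrightarrow> x = 0"
  shows "dual_penalty \<gamma> \<mu> c \<le> coord_lagrangian \<gamma> \<mu> c x z"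
proof (cases "z = 0")
  case True
  then show ?thesis using assms by (simp add: dual_penalty_def coord_lagrangian_def)
next
  case False
  have "min 0 a \<le> z * a" for a :: real
    using assms mult_left_le_one_le[of a z] by (cases "a \<ge> 0") auto
  moreover have "(x - c * z / 2)\<^sup>2 / (\<gamma> * z) \<ge> 0"
    using assms False by simp
  ultimately show ?thesis
    using coord_lagrangian_split[of \<gamma> z \<mu> c x] assms False
    unfolding dual_penalty_def by (smt (verit))
qed

lemma coord_lagrangian_eq_dual_penalty:
  assumes "\<gamma> > 0" and "z * (\<mu> - c\<^sup>2 / (4 * \<gamma>)) = dual_penalty \<gamma> \<mu> c"
  shows "coord_lagrangian \<gamma> \<mu> c (c * z / 2) z = dual_penalty \<gamma> \<mu> c"
  using assms coord_lagrangian_split[of \<gamma> z \<mu> c "c * z / 2"]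
  by (cases "z = 0") (simp_all add: coord_lagrangian_def)

lemma nonpos_if_le_quadratic_near_zero:
  fixes a K \<delta> :: real
  assumes "\<delta> > 0" and "\<And>t. 0 < t \<Longrightarrow> t < \<delta> \<Longrightarrow> t * a \<le> K * t\<^sup>2"
  shows "a \<le> 0"
proof (rule tendsto_le[OF trivial_limit_at_right_real])
  show "((\<lambda>t. K * t) \<longlongrightarrow> 0) (at_right 0)"
    by (intro tendsto_eq_intros) auto
  show "((\<lambda>t. a) \<longlongrightarrow> a) (at_right 0)"
    by simp
  have "a \<le> K * t" if "0 < t" "t < \<delta>" for t
    using assms(2)[OF that] that by (simp add: power2_eq_square mult.assoc)
  then show "\<forall>\<^sub>F t in at_right 0. a \<le> K * t"
    unfolding eventually_at_right_field using assms(1) by blast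
qed

lemma local_max_slope_le_right:
  fixes f :: "real \<Rightarrow> real"
  assumes max: "\<And>t. t * a + f (c + t) \<le> f c + K * t\<^sup>2" and "\<delta> > 0"
    and lower: "\<And>t. 0 < t \<Longrightarrow> t < \<delta> \<Longrightarrow> f c - t * s - L * t\<^sup>2 \<le> f (c + t)"
  shows "a \<le> s"
proof -
  have "t * (a - s) \<le> (K + L) * t\<^sup>2" if "0 < t" "t < \<delta>" for t
    using max[of t] lower[OF that] by (simp add: algebra_simps)
  then have "a - s \<le> 0"
    using nonpos_if_le_quadratic_near_zero[OF \<open>\<delta> > 0\<close>] by blast
  then show ?thesis by simp
qed

lemma local_max_slope_ge_left:
  fixes f :: "real \<Rightarrow> real"
  assumes max: "\<And>t. t * a + f (c + t) \<le> f c + K * t\<^sup>2" and "\<delta> > 0"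
    and lower: "\<And>t. 0 < t \<Longrightarrow> t < \<delta> \<Longrightarrow> f c + t * s - L * t\<^sup>2 \<le> f (c - t)"
  shows "s \<le> a"
proof -
  have "- a \<le> - s"
  proof (rule local_max_slope_le_right[where f = "\<lambda>u. f (- u)" and c = "- c" and \<delta> = \<delta>])
    show "t * - a + f (- (- c + t)) \<le> f (- (- c)) + K * t\<^sup>2" for t
      using max[of "- t"] by simp
    show "f (- (- c)) - t * - s - L * t\<^sup>2 \<le> f (- (- c + t))" if "0 < t" "t < \<delta>" for t
      using lower[OF that] by simp
  qed fact
  then show ?thesis by simp
qed

definition dual_penalty_breakpoint :: "real \<Rightarrow> real \<Rightarrow> real" where
  "dual_penalty_breakpoint \<gamma> \<mu> = 2 * sqrt (\<gamma> * \<mu>)"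

lemma dual_penalty_breakpoint_nonneg: "\<gamma> \<ge> 0 \<Longrightarrow> \<mu> \<ge> 0 \<Longrightarrow> dual_penalty_breakpoint \<gamma> \<mu> \<ge> 0"
  by (simp add: dual_penalty_breakpoint_def)

lemma dual_penalty_breakpoint_square:
  "\<gamma> \<ge> 0 \<Longrightarrow> \<mu> \<ge> 0 \<Longrightarrow> (dual_penalty_breakpoint \<gamma> \<mu>)\<^sup>2 = 4 * (\<gamma> * \<mu>)"
  by (simp add: dual_penalty_breakpoint_def power_mult_distrib)

lemma dual_penalty_flat:
  assumes "\<gamma> > 0" and "\<mu> \<ge> 0" and "\<bar>u\<bar> \<le> dual_penalty_breakpoint \<gamma> \<mu>"
  shows "dual_penalty \<gamma> \<mu> u = 0"
proof -
  have "u\<^sup>2 \<le> 4 * (\<gamma> * \<mu>)"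
    using power2_le_iff_abs_le[of "dual_penalty_breakpoint \<gamma> \<mu>" u] assms
    by (simp add: dual_penalty_breakpoint_nonneg dual_penalty_breakpoint_square)
  then show ?thesis
    using assms by (simp add: dual_penalty_def field_simps)
qed

lemma dual_penalty_curved:
  assumes "\<gamma> > 0" and "\<mu> \<ge> 0" and "dual_penalty_breakpoint \<gamma> \<mu> \<le> \<bar>u\<bar>"
  shows "dual_penalty \<gamma> \<mu> u = \<mu> - u\<^sup>2 / (4 * \<gamma>)"
proof -
  have "4 * (\<gamma> * \<mu>) \<le> u\<^sup>2"
    using abs_le_square_iff[of "dual_penalty_breakpoint \<gamma> \<mu>" u] assms
    by (simp add: dual_penalty_breakpoint_nonneg dual_penalty_breakpoint_square)
  then show ?thesis
    using assms by (simp add: dual_penalty_def field_simps)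
qed

lemma dual_penalty_curved_shift:
  assumes "\<gamma> > 0" and "\<mu> \<ge> 0"
    and "dual_penalty_breakpoint \<gamma> \<mu> \<le> \<bar>c\<bar>" and "dual_penalty_breakpoint \<gamma> \<mu> \<le> \<bar>c + t\<bar>"
  shows "dual_penalty \<gamma> \<mu> (c + t)
    = dual_penalty \<gamma> \<mu> c - t * (c / (2 * \<gamma>)) - 1 / (4 * \<gamma>) * t\<^sup>2"
  unfolding dual_penalty_curved[OF assms(1,2,3)] dual_penalty_curved[OF assms(1,2,4)]
  using assms(1) by (simp add: field_simps power2_eq_square)

text \<open>A coordinate \<open>c = p\<^sub>i\<close> of a dual maximiser satisfies \<open>local_max\<close>, with \<open>w\<close> the \<open>i\<close>-th
  coordinate of the associated primal point and \<open>K\<close> a diagonal entry of \<open>(A'A)\<^sup>-\<^sup>1/(4\<gamma>\<^sup>2)\<close>.\<close>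
context
  fixes \<gamma> \<mu> c w K :: real
  assumes gamma_pos: "\<gamma> > 0" and mu_nonneg: "\<mu> \<ge> 0"
    and local_max: "\<And>t. t * (w / \<gamma>) + dual_penalty \<gamma> \<mu> (c + t) \<le> dual_penalty \<gamma> \<mu> c + K * t\<^sup>2"
begin

private abbreviation "\<beta> \<equiv> dual_penalty_breakpoint \<gamma> \<mu>"

lemma local_max_flat_right:
  assumes "\<bar>c\<bar> \<le> \<beta>" and "\<delta> > 0"
    and "\<And>t. 0 < t \<Longrightarrow> t < \<delta> \<Longrightarrow> \<bar>c + t\<bar> \<le> \<beta>"
  shows "w \<le> 0"
proof -
  have "w / \<gamma> \<le> 0"
    by (rule local_max_slope_le_right[OF local_max \<open>\<delta> > 0\<close>, where L = 0])
      (simp add: dual_penalty_flat gamma_pos mu_nonneg assms)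
  then show ?thesis
    using gamma_pos by (simp add: divide_le_0_iff)
qed

lemma local_max_flat_left:
  assumes "\<bar>c\<bar> \<le> \<beta>" and "\<delta> > 0"
    and "\<And>t. 0 < t \<Longrightarrow> t < \<delta> \<Longrightarrow> \<bar>c - t\<bar> \<le> \<beta>"
  shows "0 \<le> w"
proof -
  have "0 \<le> w / \<gamma>"
    by (rule local_max_slope_ge_left[OF local_max \<open>\<delta> > 0\<close>, where L = 0])
      (simp add: dual_penalty_flat gamma_pos mu_nonneg assms)
  then show ?thesis
    using gamma_pos by (simp add: zero_le_divide_iff)
qed

lemma local_max_curved_right:
  assumes "\<beta> \<le> \<bar>c\<bar>" and "\<delta> > 0"
    and "\<And>t. 0 < t \<Longrightarrow> t < \<delta> \<Longrightarrow> \<beta> \<le> \<bar>c + t\<bar>"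
  shows "w \<le> c / 2"
proof -
  have "w / \<gamma> \<le> c / (2 * \<gamma>)"
    by (rule local_max_slope_le_right[OF local_max \<open>\<delta> > 0\<close>, where L = "1 / (4 * \<gamma>)"])
      (simp add: dual_penalty_curved_shift gamma_pos mu_nonneg assms)
  then show ?thesis
    using gamma_pos by (simp add: field_simps)
qed

lemma local_max_curved_left:
  assumes "\<beta> \<le> \<bar>c\<bar>" and "\<delta> > 0"
    and "\<And>t. 0 < t \<Longrightarrow> t < \<delta> \<Longrightarrow> \<beta> \<le> \<bar>c - t\<bar>"
  shows "c / 2 \<le> w"
proof -
  have "c / (2 * \<gamma>) \<le> w / \<gamma>"
  proof (rule local_max_slope_ge_left[OF local_max \<open>\<delta> > 0\<close>, where L = "1 / (4 * \<gamma>)"])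
    fix t :: real
    assume "0 < t" and "t < \<delta>"
    then show "dual_penalty \<gamma> \<mu> c + t * (c / (2 * \<gamma>)) - 1 / (4 * \<gamma>) * t\<^sup>2
        \<le> dual_penalty \<gamma> \<mu> (c - t)"
      using dual_penalty_curved_shift[OF gamma_pos mu_nonneg, of c "- t"] assms by simp
  qed
  then show ?thesis
    using gamma_pos by (simp add: field_simps)
qed

lemma local_max_inside_breakpoint:
  assumes "\<bar>c\<bar> < \<beta>"
  shows "w = 0"
proof -
  have "\<bar>c + t\<bar> \<le> \<beta>" and "\<bar>c - t\<bar> \<le> \<beta>"
    if "0 < t" and "t < \<beta> - \<bar>c\<bar>" for t
    using that by linarith+
  then show ?thesis
    using local_max_flat_right[of "\<beta> - \<bar>c\<bar>"] local_max_flat_left[of "\<beta> - \<bar>c\<bar>"]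
      assms
    by fastforce
qed

lemma local_max_outside_breakpoint:
  assumes "\<beta> < \<bar>c\<bar> \<or> \<beta> = 0"
  shows "w = c / 2"
proof -
  define \<delta> where "\<delta> = (if \<beta> = 0 then 1 else \<bar>c\<bar> - \<beta>)"
  have "\<beta> \<ge> 0"
    using gamma_pos mu_nonneg by (simp add: dual_penalty_breakpoint_nonneg)
  have "\<delta> > 0"
    using assms by (auto simp: \<delta>_def)
  moreover have "\<beta> \<le> \<bar>c + t\<bar>" and "\<beta> \<le> \<bar>c - t\<bar>"
    if "0 < t" and "t < \<delta>" for t
    using assms that \<open>\<beta> \<ge> 0\<close> unfolding \<delta>_def by (smt (verit))+
  ultimately show ?thesis
    using local_max_curved_right[of \<delta>] local_max_curved_left[of \<delta>] assms \<open>\<beta> \<ge> 0\<close>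
    by fastforce
qed

lemma local_max_at_breakpoint:
  assumes "\<beta> > 0" and "\<bar>c\<bar> = \<beta>"
  shows "0 \<le> 2 * w / c" and "2 * w / c \<le> 1"
proof -
  consider "c > 0" | "c < 0"
    using assms by linarith
  then have "0 \<le> 2 * w / c \<and> 2 * w / c \<le> 1"
  proof cases
    case 1
    have "\<bar>c - t\<bar> \<le> \<beta>" if "0 < t" and "t < c" for t
      using that assms by linarith
    moreover have "\<beta> \<le> \<bar>c + t\<bar>" if "0 < t" for t
      using that assms 1 by linarith
    ultimately have "0 \<le> w" and "w \<le> c / 2"
      using assms 1 local_max_flat_left[of c] local_max_curved_right[of 1] by auto
    then show ?thesis
      using 1 by (simp add: field_simps)
  next
    case 2
    have "\<bar>c + t\<bar> \<le> \<beta>" if "0 < t" and "t < - c" for t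
      using that assms by linarith
    moreover have "\<beta> \<le> \<bar>c - t\<bar>" if "0 < t" for t
      using that assms 2 by linarith
    ultimately have "w \<le> 0" and "c / 2 \<le> w"
      using assms 2 local_max_flat_right[of "- c"] local_max_curved_left[of 1] by auto
    then show ?thesis
      using 2 by (simp add: field_simps)
  qed
  then show "0 \<le> 2 * w / c" and "2 * w / c \<le> 1"
    by auto
qed

lemma dual_penalty_local_max_witness:
  obtains z where "0 \<le> z" and "z \<le> 1" and "w = c * z / 2"
    and "z * (\<mu> - c\<^sup>2 / (4 * \<gamma>)) = dual_penalty \<gamma> \<mu> c"
proof -
  have "\<beta> \<ge> 0"
    using gamma_pos mu_nonneg by (simp add: dual_penalty_breakpoint_nonneg)
  then consider "\<bar>c\<bar> < \<beta>" | "\<beta> < \<bar>c\<bar> \<or> \<beta> = 0" | "0 < \<beta>" and "\<bar>c\<bar> = \<beta>"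
    by linarith
  then show ?thesis
  proof cases
    case 1
    then show ?thesis
      using that[of 0] local_max_inside_breakpoint dual_penalty_flat[OF gamma_pos mu_nonneg, of c]
      by simp
  next
    case 2
    then show ?thesis
      using that[of 1] local_max_outside_breakpoint \<open>\<beta> \<ge> 0\<close>
        dual_penalty_curved[OF gamma_pos mu_nonneg, of c]
      by fastforce
  next
    case 3
    then have "dual_penalty \<gamma> \<mu> c = 0" and "\<mu> - c\<^sup>2 / (4 * \<gamma>) = 0"
      using dual_penalty_flat[OF gamma_pos mu_nonneg, of c]
        dual_penalty_curved[OF gamma_pos mu_nonneg, of c]
      by auto
    moreover have "w = c * (2 * w / c) / 2"
      using 3 by auto
    ultimately show ?thesis
      using that[of "2 * w / c"] local_max_at_breakpoint[OF 3] by simp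
  qed
qed

end

section \<open>Duality for (CR)\<close>

lemma matrix_inv_right:
  fixes B :: "'a::semiring_1^'n^'n"
  assumes "invertible B"
  shows "B ** matrix_inv B = mat 1"
  using someI_ex[OF assms[unfolded invertible_def]] by (simp add: matrix_inv_def)

lemma matrix_inv_symmetric:
  fixes B :: "'a::comm_semiring_1^'n^'n"
  assumes "invertible B" and "transpose B = B"
  shows "transpose (matrix_inv B) = matrix_inv B"
proof -
  have "transpose (matrix_inv B) ** B = mat 1"
    using matrix_inv_right[OF assms(1)] assms(2) by (metis matrix_transpose_mul transpose_mat)
  then have "transpose (matrix_inv B) = transpose (matrix_inv B) ** (B ** matrix_inv B)"
    by (simp add: matrix_inv_right[OF assms(1)])
  also have "\<dots> = matrix_inv B"
    by (simp add: matrix_mul_assoc \<open>transpose (matrix_inv B) ** B = mat 1\<close>)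
  finally show ?thesis .
qed

lemma quadratic_form_diff_axis:
  fixes M :: "real^'n^'n"
  assumes "transpose M = M"
  shows "(v - axis i s) \<bullet> (M *v (v - axis i s))
    = v \<bullet> (M *v v) - 2 * s * (M *v v) $ i + s\<^sup>2 * M $ i $ i"
proof -
  have "(M *v axis i s) $ i = M $ i $ i * s"
    by (simp add: matrix_vector_mult_def axis_def if_distrib cong: if_cong)
  then have "axis i s \<bullet> (M *v axis i s) = s\<^sup>2 * M $ i $ i"
    by (simp add: inner_axis' power2_eq_square)
  moreover have "v \<bullet> (M *v axis i s) = axis i s \<bullet> (M *v v)"
    by (metis assms dot_lmul_matrix inner_commute vector_transpose_matrix)
  ultimately show ?thesis
    by (simp add: matrix_vector_mult_diff_distrib inner_diff inner_axis')
qed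

lemma least_squares_gap:
  fixes A :: "real^'n^'m"
  assumes "transpose A *v (A *v x0) = v"
  shows "(norm (y - A *v x))\<^sup>2 + 2 * ((transpose A *v y - v) \<bullet> x)
    = (norm y)\<^sup>2 - v \<bullet> x0 + (norm (A *v (x - x0)))\<^sup>2"
proof -
  have "(transpose A *v w) \<bullet> x' = w \<bullet> (A *v x')" for w x'
    by (simp add: dot_lmul_matrix)
  then have "v \<bullet> x = (A *v x0) \<bullet> (A *v x)" and "v \<bullet> x0 = (A *v x0) \<bullet> (A *v x0)"
    and "(transpose A *v y) \<bullet> x = y \<bullet> (A *v x)"
    by (simp_all flip: assms)
  then show ?thesis
    by (simp add: power2_norm_eq_inner matrix_vector_mult_diff_distrib inner_diff inner_commute
        algebra_simps)
qed

lemma sum_add_axis: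
  fixes f :: "real \<Rightarrow> 'b::ab_group_add" and p :: "real^'n"
  shows "(\<Sum>j\<in>UNIV. f ((p + axis i t) $ j)) = (\<Sum>j\<in>UNIV. f (p $ j)) - f (p $ i) + f (p $ i + t)"
proof -
  have "(\<Sum>j\<in>UNIV - {i}. f ((p + axis i t) $ j)) = (\<Sum>j\<in>UNIV - {i}. f (p $ j))"
    by (rule sum.cong) (auto simp: axis_def)
  then show ?thesis
    by (simp add: sum.remove[of UNIV i])
qed

lemma continuous_on_matrix_vector_mult [continuous_intros]:
  fixes f :: "'a::topological_space \<Rightarrow> real^'n"
  shows "continuous_on S f \<Longrightarrow> continuous_on S (\<lambda>x. (M::real^'n^'m) *v f x)"
  using continuous_on_compose[of S f "(*v) M"] matrix_vector_mult_linear_continuous_on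
  by (auto simp: o_def)

locale CR_problem =
  fixes A :: "real^'n^'m" and y :: "real^'m" and \<gamma> \<mu> :: real
  assumes invertible_gram: "invertible (transpose A ** A)"
    and gamma_pos: "\<gamma> > 0" and mu_nonneg: "\<mu> \<ge> 0"
begin

definition dual_shift :: "real^'n \<Rightarrow> real^'n" where
  "dual_shift p = transpose A *v y - (1 / (2 * \<gamma>)) *\<^sub>R p"

text \<open>The minimiser of \<open>\<parallel>y - A x\<parallel>\<^sup>2 + p \<bullet> x / \<gamma>\<close> over \<open>x\<close>.\<close>
definition primal_of :: "real^'n \<Rightarrow> real^'n" where
  "primal_of p = matrix_inv (transpose A ** A) *v dual_shift p"

lemma normal_equation: "transpose A *v (A *v primal_of p) = dual_shift p"
proof -
  have "transpose A *v (A *v primal_of p)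
      = (transpose A ** A ** matrix_inv (transpose A ** A)) *v dual_shift p"
    by (simp add: primal_of_def matrix_vector_mul_assoc matrix_mul_assoc)
  then show ?thesis
    by (simp only: matrix_inv_right[OF invertible_gram] matrix_vector_mul_lid)
qed

lemma CR_dual_eq:
  "CR_dual A y \<gamma> \<mu> p
    = (norm y)\<^sup>2 - dual_shift p \<bullet> primal_of p + (\<Sum>i\<in>UNIV. dual_penalty \<gamma> \<mu> (p $ i))"
  by (simp add: CR_dual_def dual_shift_def primal_of_def dual_penalty_def Let_def)

lemma dual_shift_inner_primal: "dual_shift p \<bullet> primal_of p = (norm (A *v primal_of p))\<^sup>2"
  by (simp flip: normal_equation add: dot_lmul_matrix power2_norm_eq_inner)

lemma CR_obj_eq_dual_plus_gap:
  assumes "\<forall>i. z $ i = 0 \<longrightarrow> x $ i = 0"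
  shows "CR_obj A y \<gamma> \<mu> x z = ereal (CR_dual A y \<gamma> \<mu> p + (norm (A *v (x - primal_of p)))\<^sup>2
    + (\<Sum>i\<in>UNIV. coord_lagrangian \<gamma> \<mu> (p $ i) (x $ i) (z $ i) - dual_penalty \<gamma> \<mu> (p $ i)))"
proof -
  define pers where "pers i = (if z $ i = 0 then 0 else (x $ i)\<^sup>2 / z $ i)" for i
  have "persp (x $ i) (z $ i) = ereal (pers i)" for i
    using assms by (simp add: persp_def pers_def)
  then have obj: "CR_obj A y \<gamma> \<mu> x z
      = ereal ((norm (y - A *v x))\<^sup>2 + (1 / \<gamma>) * (\<Sum>i\<in>UNIV. pers i) + \<mu> * (\<Sum>i\<in>UNIV. z $ i))"
    by (simp add: CR_obj_def)
  have "(\<Sum>i\<in>UNIV. coord_lagrangian \<gamma> \<mu> (p $ i) (x $ i) (z $ i))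
      = (1 / \<gamma>) * (\<Sum>i\<in>UNIV. pers i) + \<mu> * (\<Sum>i\<in>UNIV. z $ i) - (p \<bullet> x) / \<gamma>"
    by (simp add: coord_lagrangian_def pers_def sum.distrib sum_subtractf sum_distrib_left
        inner_vec_def sum_divide_distrib)
  moreover have "(p \<bullet> x) / \<gamma> = 2 * ((transpose A *v y - dual_shift p) \<bullet> x)"
    using gamma_pos by (simp add: dual_shift_def field_simps)
  moreover note least_squares_gap[OF normal_equation[of p], of y x]
  ultimately show ?thesis
    unfolding obj CR_dual_eq by (simp add: sum_subtractf)
qed

lemma CR_obj_infinite:
  assumes "z $ i = 0" and "x $ i \<noteq> 0"
  shows "CR_obj A y \<gamma> \<mu> x z = \<infinity>"
proof -
  have "persp (x $ i) (z $ i) = \<infinity>"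
    using assms by (simp add: persp_def)
  then have "(\<Sum>i\<in>UNIV. persp (x $ i) (z $ i)) = \<infinity>"
    by (auto simp: sum_Pinfty)
  then show ?thesis
    using gamma_pos by (simp add: CR_obj_def)
qed

lemma weak_duality:
  assumes "\<forall>i. 0 \<le> z $ i \<and> z $ i \<le> 1"
  shows "ereal (CR_dual A y \<gamma> \<mu> p) \<le> CR_obj A y \<gamma> \<mu> x z"
proof (cases "\<forall>i. z $ i = 0 \<longrightarrow> x $ i = 0")
  case True
  have "dual_penalty \<gamma> \<mu> (p $ i) \<le> coord_lagrangian \<gamma> \<mu> (p $ i) (x $ i) (z $ i)" for i
    using assms True gamma_pos by (simp add: dual_penalty_le_coord_lagrangian)
  then have "0 \<le> (\<Sum>i\<in>UNIV. coord_lagrangian \<gamma> \<mu> (p $ i) (x $ i) (z $ i) - dual_penalty \<gamma> \<mu> (p $ i))"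
    by (simp add: sum_nonneg)
  then show ?thesis
    unfolding CR_obj_eq_dual_plus_gap[OF True, of p] by simp
next
  case False
  then show ?thesis
    using CR_obj_infinite by auto
qed

lemma CR_dual_le_coordinate:
  "CR_dual A y \<gamma> \<mu> p \<le> (norm y)\<^sup>2 + \<mu> - (p $ i)\<^sup>2 / (4 * \<gamma>)"
proof -
  have "(\<Sum>j\<in>UNIV. dual_penalty \<gamma> \<mu> (p $ j)) \<le> dual_penalty \<gamma> \<mu> (p $ i)"
    using member_le_sum[of i UNIV "\<lambda>j. - dual_penalty \<gamma> \<mu> (p $ j)"]
    by (simp add: dual_penalty_def sum_negf)
  also have "\<dots> \<le> \<mu> - (p $ i)\<^sup>2 / (4 * \<gamma>)"
    by (simp add: dual_penalty_def)
  finally show ?thesis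
    using zero_le_power2[of "norm (A *v primal_of p)"]
    unfolding CR_dual_eq dual_shift_inner_primal by linarith
qed

lemma continuous_CR_dual: "continuous_on UNIV (CR_dual A y \<gamma> \<mu>)"
  unfolding CR_dual_eq[abs_def] dual_shift_def primal_of_def dual_penalty_def
  using gamma_pos by (intro continuous_intros) auto

lemma CR_dual_attains_max: "\<exists>p. \<forall>q. CR_dual A y \<gamma> \<mu> q \<le> CR_dual A y \<gamma> \<mu> p"
proof -
  let ?D = "CR_dual A y \<gamma> \<mu>"
  define S where "S = {q. ?D 0 \<le> ?D q}"
  define R where "R = sqrt (4 * \<gamma> * ((norm y)\<^sup>2 + \<mu> - ?D 0))"
  have "\<bar>q $ i\<bar> \<le> R" if "q \<in> S" for q i
  proof -
    have "(q $ i)\<^sup>2 / (4 * \<gamma>) \<le> (norm y)\<^sup>2 + \<mu> - ?D 0"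
      using that CR_dual_le_coordinate[of q i] by (simp add: S_def)
    then show ?thesis
      using gamma_pos by (simp add: R_def real_le_rsqrt field_simps flip: real_sqrt_abs)
  qed
  then have "S \<subseteq> cbox (\<chi> i. - R) (\<chi> i. R)"
    by (auto simp: mem_box_cart abs_le_iff minus_le_iff)
  moreover have "closed S"
    unfolding S_def by (intro closed_Collect_le continuous_CR_dual continuous_intros)
  ultimately have "compact S"
    by (metis bounded_cbox bounded_subset compact_eq_bounded_closed)
  moreover have "0 \<in> S"
    by (simp add: S_def)
  ultimately obtain p where "p \<in> S" and "\<forall>q\<in>S. ?D q \<le> ?D p"
    using continuous_attains_sup[of S ?D] continuous_on_subset[OF continuous_CR_dual] by blast
  then have "?D q \<le> ?D p" for q
    by (cases "q \<in> S") (auto simp: S_def)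
  then show ?thesis
    by blast
qed

lemma CR_dual_add_axis:
  "CR_dual A y \<gamma> \<mu> (p + axis i t) = CR_dual A y \<gamma> \<mu> p + t * (primal_of p $ i / \<gamma>)
    - matrix_inv (transpose A ** A) $ i $ i / (4 * \<gamma>\<^sup>2) * t\<^sup>2
    + dual_penalty \<gamma> \<mu> (p $ i + t) - dual_penalty \<gamma> \<mu> (p $ i)"
proof -
  define M where "M = matrix_inv (transpose A ** A)"
  have "transpose M = M"
    unfolding M_def by (intro matrix_inv_symmetric invertible_gram) (simp add: matrix_transpose_mul)
  have "dual_shift (p + axis i t) = dual_shift p - axis i (t / (2 * \<gamma>))"
    by (simp add: dual_shift_def vec_eq_iff axis_def add_divide_distrib)
  then have "dual_shift (p + axis i t) \<bullet> primal_of (p + axis i t)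
      = (dual_shift p - axis i (t / (2 * \<gamma>))) \<bullet> (M *v (dual_shift p - axis i (t / (2 * \<gamma>))))"
    by (simp add: primal_of_def M_def)
  also have "\<dots> = dual_shift p \<bullet> primal_of p - t * (primal_of p $ i / \<gamma>)
      + M $ i $ i / (4 * \<gamma>\<^sup>2) * t\<^sup>2"
    unfolding quadratic_form_diff_axis[OF \<open>transpose M = M\<close>] using gamma_pos
    by (simp add: primal_of_def M_def power_divide field_simps)
  finally show ?thesis
    unfolding CR_dual_eq sum_add_axis M_def by simp
qed

lemma strong_duality_at_max:
  assumes max: "\<forall>q. CR_dual A y \<gamma> \<mu> q \<le> CR_dual A y \<gamma> \<mu> p"
  obtains z where "\<forall>i. 0 \<le> z $ i \<and> z $ i \<le> 1"
    and "CR_obj A y \<gamma> \<mu> (primal_of p) z = ereal (CR_dual A y \<gamma> \<mu> p)"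
proof -
  define x where "x = primal_of p"
  have "\<exists>\<zeta>. 0 \<le> \<zeta> \<and> \<zeta> \<le> 1 \<and> x $ i = p $ i * \<zeta> / 2
      \<and> \<zeta> * (\<mu> - (p $ i)\<^sup>2 / (4 * \<gamma>)) = dual_penalty \<gamma> \<mu> (p $ i)" for i
  proof -
    have "t * (x $ i / \<gamma>) + dual_penalty \<gamma> \<mu> (p $ i + t)
        \<le> dual_penalty \<gamma> \<mu> (p $ i) + matrix_inv (transpose A ** A) $ i $ i / (4 * \<gamma>\<^sup>2) * t\<^sup>2"
      for t
      using max[rule_format, of "p + axis i t"] unfolding CR_dual_add_axis x_def by linarith
    then show ?thesis
      by (metis dual_penalty_local_max_witness gamma_pos mu_nonneg)
  qed
  then obtain z where z: "\<And>i. 0 \<le> z $ i \<and> z $ i \<le> 1 \<and> x $ i = p $ i * z $ i / 2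
      \<and> z $ i * (\<mu> - (p $ i)\<^sup>2 / (4 * \<gamma>)) = dual_penalty \<gamma> \<mu> (p $ i)"
    by (metis vec_lambda_beta)
  have "coord_lagrangian \<gamma> \<mu> (p $ i) (x $ i) (z $ i) = dual_penalty \<gamma> \<mu> (p $ i)" for i
    using z[of i] coord_lagrangian_eq_dual_penalty[OF gamma_pos] by metis
  moreover have "\<forall>i. z $ i = 0 \<longrightarrow> x $ i = 0"
    using z by (metis div_0 mult_zero_right)
  ultimately have "CR_obj A y \<gamma> \<mu> x z = ereal (CR_dual A y \<gamma> \<mu> p)"
    by (simp add: CR_obj_eq_dual_plus_gap[where p = p] x_def)
  moreover have "\<forall>i. 0 \<le> z $ i \<and> z $ i \<le> 1"
    using z by blast
  ultimately show ?thesis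
    using that by (simp add: x_def)
qed

end

theorem mainTheorem3:
  fixes A :: "real^'n^'m" and y :: "real^'m" and \<gamma> \<mu> :: real
  assumes "invertible (transpose A ** A)" and "\<gamma> > 0" and "\<mu> \<ge> 0"
  shows "(\<exists>p. ereal (CR_dual A y \<gamma> \<mu> p) = zeta_CR A y \<gamma> \<mu>)
       \<and> (\<forall>p. ereal (CR_dual A y \<gamma> \<mu> p) \<le> zeta_CR A y \<gamma> \<mu>)"
proof -
  interpret CR_problem A y \<gamma> \<mu>
    using assms by unfold_locales
  have lower: "ereal (CR_dual A y \<gamma> \<mu> p) \<le> zeta_CR A y \<gamma> \<mu>" for p
    unfolding zeta_CR_def by (rule INF_greatest) (auto intro: weak_duality)
  obtain p where "\<forall>q. CR_dual A y \<gamma> \<mu> q \<le> CR_dual A y \<gamma> \<mu> p"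
    using CR_dual_attains_max by blast
  then obtain z where "\<forall>i. 0 \<le> z $ i \<and> z $ i \<le> 1"
    and "CR_obj A y \<gamma> \<mu> (primal_of p) z = ereal (CR_dual A y \<gamma> \<mu> p)"
    by (rule strong_duality_at_max)
  then have "zeta_CR A y \<gamma> \<mu> \<le> ereal (CR_dual A y \<gamma> \<mu> p)"
    unfolding zeta_CR_def by (intro INF_lower2[of "(primal_of p, z)"]) auto
  then show ?thesis
    using lower antisym by blast
qed

end
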